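(* Consider a one-site PTM cascade with $n\ge1$ layers and positive total amounts. For each $i=0,\dots,n-1$ there is $\beta_i\in(0,\infty)$ such that: (a) $f_i$ is a continuous increasing function on $[0,\beta_i)$ with $f_i(0)=0$, mapping $[0,\beta_i)$ onto $[0,\infty)$; $\beta_i$ is the smallest positive singularity of $f_i$, and $d_{i+1}\big(f_{i+1}(\beta_i),f_{i+2}^Y(\beta_i)\big)=0$; (b) at the BMSS, $S_n^1\in[0,\beta_i)$ and $S_i^1=f_i(S_n^1)$ (with $S_0^1=E$); $f_i$ depends only on rate constants and on $\overline{F}_j,\overline{S}_j$ for $j\ge i+1$, and $f_i(s)=\frac{\lambda_{i+1}\cdots\lambda_n\overline{F}_{i+1}\cdots\overline{F}_n\,s}{d_{i+1}(f_{i+1}(s),f^Y_{i+2}(s))\cdots d_n(f_n(s),0)}$; (c) $\beta_{n-1}=\alpha_n$ and $\beta_i<\beta_{i+1}$ for $i<n-1$; (d) if all parameters except $\overline{S}_{i+1}$ are fixed and $\overline{S}_{i+1}\to+\infty$, then $\beta_i\to\beta_{i+1}$, where $\beta_n:=+\infty$; (e) at the BMSS, $S_j^1<\alpha_j$ for every $j=1,\dots,n$.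
   Context: A one-site PTM cascade with $n$ layers has species $E=S_0^1$ and, for $i=1,\dots,n$, $S_i^0,S_i^1,F_i,Y_i^0,Y_i^1$, with reactions $S_{i-1}^1+S_i^0 \rightleftharpoons Y_i^0 \to S_{i-1}^1+S_i^1$ (rate constants $a_i^0,b_i^0,c_i^0$) and $F_i+S_i^1\rightleftharpoons Y_i^1\to F_i+S_i^0$ (rate constants $a_i^1,b_i^1,c_i^1$), all positive, mass-action kinetics. Put $\delta_i=a_i^1/(b_i^1+c_i^1)$, $\gamma_i=(c_i^1/c_i^0)\delta_i$, $\lambda_i=\frac{b_i^0+c_i^0}{a_i^0}\gamma_i$. Given total amounts $\overline{E},\overline{F}_i,\overline{S}_i$, a steady state is a real solution of: $Y_i^0=\gamma_iF_iS_i^1$, $Y_i^1=\delta_iF_iS_i^1$, $\lambda_iF_iS_i^1=S_i^0S_{i-1}^1$, $\overline{F}_i=F_i+Y_i^1$, $\overline{S}_i=S_i^0+S_i^1+Y_i^0+Y_i^1+Y_{i+1}^0$ ($i=1,\dots,n$, $Y_{n+1}^0:=0$), $\overline{E}=E+Y_1^0$. A BMSS is a steady state with positive total amounts and all concentrations nonnegative; it exists and is unique. Increasing means strictly increasing. Define for $i=1,\dots,n$: $d_i(x,y)=(\overline{S}_i-y)-x-\overline{F}_i(\delta_i+\gamma_i)x+\delta_i(\overline{S}_i-y)x-\delta_ix^2$, and let $\alpha_i$ be the unique positive root of $x\mapsto d_i(x,0)$. Let $g_i^Y(x)=\frac{\gamma_i\overline{F}_ix}{1+\delta_ix}$. Define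 rational functions of $s$ recursively: $f_n(s)=s$, $f_{n+1}^Y(s)=0$, and for $i=n,\dots,1$: $f_i^Y(s)=g_i^Y(f_i(s))$, $f_{i-1}(s)=\frac{\lambda_i\overline{F}_if_i(s)}{d_i(f_i(s),f_{i+1}^Y(s))}$. *)

theory Defs
  imports "HOL-Analysis.Analysis"
begin

text \<open>Parameters of a one-site PTM cascade: rate constants and total amounts,
  all indexed by the layer i (meaningful for i = 1..n).\<close>
record ptm_params =
  a0 :: "nat \<Rightarrow> real"
  b0 :: "nat \<Rightarrow> real"
  c0 :: "nat \<Rightarrow> real"
  a1 :: "nat \<Rightarrow> real"
  b1 :: "nat \<Rightarrow> real"
  c1 :: "nat \<Rightarrow> real"
  Fb :: "nat \<Rightarrow> real"
  Sb :: "nat \<Rightarrow> real"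

definition valid_params :: "ptm_params \<Rightarrow> nat \<Rightarrow> bool" where
  "valid_params P n \<longleftrightarrow> (\<forall>i\<in>{1..n}.
     0 < a0 P i \<and> 0 < b0 P i \<and> 0 < c0 P i \<and> 0 < a1 P i \<and> 0 < b1 P i \<and> 0 < c1 P i
     \<and> 0 < Fb P i \<and> 0 < Sb P i)"

definition delta :: "ptm_params \<Rightarrow> nat \<Rightarrow> real" where
  "delta P i = a1 P i / (b1 P i + c1 P i)"

definition gamma :: "ptm_params \<Rightarrow> nat \<Rightarrow> real" where
  "gamma P i = (c1 P i / c0 P i) * delta P i"

definition lam :: "ptm_params \<Rightarrow> nat \<Rightarrow> real" where
  "lam P i = ((b0 P i + c0 P i) / a0 P i) * gamma P i"

definition dd :: "ptm_params \<Rightarrow> nat \<Rightarrow> real \<Rightarrow> real \<Rightarrow> real" where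
  "dd P i x y = (Sb P i - y) - x - Fb P i * (delta P i + gamma P i) * x
                + delta P i * (Sb P i - y) * x - delta P i * x ^ 2"

definition alpha :: "ptm_params \<Rightarrow> nat \<Rightarrow> real" where
  "alpha P i = (THE x. 0 < x \<and> dd P i x 0 = 0)"

definition gY :: "ptm_params \<Rightarrow> nat \<Rightarrow> real \<Rightarrow> real" where
  "gY P i x = gamma P i * Fb P i * x / (1 + delta P i * x)"

text \<open>cas P n j s = (f_{n-j}(s), f^Y_{n-j+1}(s)), computed by the backward recursion.\<close>
primrec cas :: "ptm_params \<Rightarrow> nat \<Rightarrow> nat \<Rightarrow> real \<Rightarrow> real \<times> real" where
  "cas P n 0 s = (s, 0)"
| "cas P n (Suc j) s =
     (let x = fst (cas P n j s); y = snd (cas P n j s); i = n - j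
      in (lam P i * Fb P i * x / dd P i x y, gY P i x))"

definition fcas :: "ptm_params \<Rightarrow> nat \<Rightarrow> nat \<Rightarrow> real \<Rightarrow> real" where
  "fcas P n i s = fst (cas P n (n - i) s)"

definition fYcas :: "ptm_params \<Rightarrow> nat \<Rightarrow> nat \<Rightarrow> real \<Rightarrow> real" where
  "fYcas P n i s = (if i = n + 1 then 0 else gY P i (fcas P n i s))"

definition singular :: "(real \<Rightarrow> real) \<Rightarrow> real \<Rightarrow> bool" where
  "singular g s \<longleftrightarrow> \<not> (\<exists>L. (g \<longlongrightarrow> L) (at s))"

definition beta :: "ptm_params \<Rightarrow> nat \<Rightarrow> nat \<Rightarrow> real" where
  "beta P n i = Inf {s. 0 < s \<and> singular (fcas P n i) s}"

text \<open>Steady-state equations together with nonnegativity of concentrations (BMSS).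
  Concentrations: E, and S0 i = S_i^0, S1 i = S_i^1, Fc i = F_i, Y0 i = Y_i^0, Y1 i = Y_i^1.\<close>
definition bmss :: "ptm_params \<Rightarrow> nat \<Rightarrow> real \<Rightarrow> real \<Rightarrow> (nat \<Rightarrow> real) \<Rightarrow> (nat \<Rightarrow> real)
     \<Rightarrow> (nat \<Rightarrow> real) \<Rightarrow> (nat \<Rightarrow> real) \<Rightarrow> (nat \<Rightarrow> real) \<Rightarrow> bool" where
  "bmss P n Eb E S0 S1 Fc Y0 Y1 \<longleftrightarrow>
     (let S1' = (\<lambda>i. if i = 0 then E else S1 i);
          Y0' = (\<lambda>i. if i = n + 1 then 0 else Y0 i) in
     (\<forall>i\<in>{1..n}.
        Y0 i = gamma P i * Fc i * S1 i \<and>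
        Y1 i = delta P i * Fc i * S1 i \<and>
        lam P i * Fc i * S1 i = S0 i * S1' (i - 1) \<and>
        Fb P i = Fc i + Y1 i \<and>
        Sb P i = S0 i + S1 i + Y0 i + Y1 i + Y0' (i + 1)) \<and>
     Eb = E + Y0 1 \<and>
     0 \<le> E \<and>
     (\<forall>i\<in>{1..n}. 0 \<le> S0 i \<and> 0 \<le> S1 i \<and> 0 \<le> Fc i \<and> 0 \<le> Y0 i \<and> 0 \<le> Y1 i))"

end

theory Submission
  imports Defs
begin

(* Every f_i is obtained from f_{i+1} by the same one-layer operation
     f_i(s) = L * x(s) / D(x(s), y(s)),  x = f_{i+1},  y = f^Y_{i+2},
   where D(x,y) = d_{i+1}(x,y) is a "layer denominator".  The whole theorem rests on two facts
   about D along a continuous increasing x (with x(0) = 0) and a continuous nondecreasing y: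
   D starts at S > 0, and once it is <= 0 it stays negative, so it has a first zero beta,
   and on [0,beta) the quotient L*x/D is continuous, strictly increasing and blows up at beta.

   A downward
   induction over the layers then shows that every f_i is a "good branch" on [0,beta_i)
   (parts (a) and (c)); the limits in part (d) follow by comparing D with its value for large
   total amount.  Finally the steady-state equations are shown to force S_i^1 = f_i(S_n^1)
   with all denominators positive, which gives parts (b) and (e). *)

section \<open>Elementary real analysis\<close>

text \<open>A concave quadratic with positive constant term has exactly one positive root a,
  and it factors as -(x - a)(d x + S/a); this is how alpha_i is made explicit.\<close>
lemma concave_quadratic_root:
  fixes S d b :: real
  assumes S: "S > 0" and d: "d > 0"
  shows "\<exists>a>0. \<forall>x. S + b*x - d*x^2 = -(x-a)*(d*x + S/a)"
proof -
  define r where "r = sqrt (b^2 + 4*d*S)"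
  have disc: "0 \<le> b^2 + 4*d*S" using S d by simp
  have r2: "r^2 = b^2 + 4*d*S" and r0: "r \<ge> 0" unfolding r_def using disc by simp_all
  have "\<bar>b\<bar> < r" using r2 r0 S d power_less_imp_less_base[of "\<bar>b\<bar>" 2 r] by simp
  define a where "a = (b + r)/(2*d)"
  have a0: "a > 0" unfolding a_def using \<open>\<bar>b\<bar> < r\<close> d by simp
  have root: "S = d*a^2 - b*a" unfolding a_def using d r2
    by (simp add: field_simps power2_eq_square)
  have "S + b*x - d*x^2 = -(x-a)*(d*x + (d*a - b))" for x
    by (subst root) (simp add: algebra_simps power2_eq_square)
  moreover have "S/a = d*a - b" using root a0 by (simp add: field_simps power2_eq_square)
  ultimately show ?thesis using a0 by auto
qed

lemma blowup_singularity:
  fixes f :: "real \<Rightarrow> real"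
  assumes b: "0 < \<beta>" and c: "continuous_on {0..<\<beta>} f" and l: "filterlim f at_top (at_left \<beta>)"
  shows "singular f \<beta>" "\<And>s. 0 < s \<Longrightarrow> s < \<beta> \<Longrightarrow> \<not> singular f s"
    "Inf {s. 0 < s \<and> singular f s} = \<beta>"
proof -
  show sb: "singular f \<beta>" unfolding singular_def
  proof
    assume "\<exists>L. (f \<longlongrightarrow> L) (at \<beta>)"
    then obtain L where "(f \<longlongrightarrow> L) (at_left \<beta>)" using tendsto_mono[OF at_within_le_at] by blast
    thus False
      using not_tendsto_and_filterlim_at_infinity[OF trivial_limit_at_left_real _
          filterlim_at_top_imp_at_infinity[OF l]] by blast
  qed
  show ns: "\<not> singular f s" if "0 < s" "s < \<beta>" for s
  proof -
    have "isCont f s" using continuous_on_interior[OF c] that by simp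
    thus ?thesis unfolding singular_def isCont_def by blast
  qed
  show "Inf {s. 0 < s \<and> singular f s} = \<beta>"
    by (rule cInf_eq_minimum) (use b sb ns in force)+
qed

lemma blowup_onto:
  fixes f :: "real \<Rightarrow> real"
  assumes b: "0 < \<beta>" and c: "continuous_on {0..<\<beta>} f" and m: "strict_mono_on {0..<\<beta>} f"
    and f0: "f 0 = 0" and l: "filterlim f at_top (at_left \<beta>)"
  shows "f ` {0..<\<beta>} = {0..}"
proof
  show "f ` {0..<\<beta>} \<subseteq> {0..}"
  proof
    fix w assume "w \<in> f ` {0..<\<beta>}"
    then obtain s where s: "s \<in> {0..<\<beta>}" "w = f s" by blast
    have "f 0 \<le> f s" using strict_mono_onD[OF m, of 0 s] s b by (cases "s = 0") auto
    thus "w \<in> {0..}" using s f0 by simp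
  qed
  show "{0..} \<subseteq> f ` {0..<\<beta>}"
  proof
    fix w :: real assume w: "w \<in> {0..}"
    have "\<forall>\<^sub>F s in at_left \<beta>. w < f s \<and> s \<in> {0<..<\<beta>}"
      using l[unfolded filterlim_at_top_dense] eventually_at_left_real[OF b]
      by (auto intro: eventually_conj)
    then obtain s where s: "w < f s" "0 < s" "s < \<beta>"
      using eventually_happens'[OF trivial_limit_at_left_real] by fastforce
    have "continuous_on {0..s} f" by (rule continuous_on_subset[OF c]) (use s in auto)
    then obtain u where "0 \<le> u" "u \<le> s" "f u = w"
      using IVT'[of f 0 w s] w f0 s by auto
    thus "w \<in> f ` {0..<\<beta>}" using s by force
  qed
qed

section \<open>The layer denominator\<close>

definition layer_den :: "real \<Rightarrow> real \<Rightarrow> real \<Rightarrow> real \<Rightarrow> real \<Rightarrow> real \<Rightarrow> real" where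
  "layer_den S F d g x y = (S - y) - x - F*(d+g)*x + d*(S-y)*x - d*x^2"

lemma dd_layer_den: "dd P j x y = layer_den (Sb P j) (Fb P j) (delta P j) (gamma P j) x y"
  unfolding dd_def layer_den_def by simp

lemma layer_den_continuous_on[continuous_intros]:
  "continuous_on A x \<Longrightarrow> continuous_on A y \<Longrightarrow> continuous_on A (\<lambda>s. layer_den S F d g (x s) (y s))"
  unfolding layer_den_def by (intro continuous_intros)

lemma layer_den_exhausted:
  fixes S F d g x y :: real
  assumes d: "d > 0" and F: "F \<ge> 0" and g: "g \<ge> 0" and x: "0 < x" and Sy: "S \<le> y"
  shows "layer_den S F d g x y < 0"
proof -
  have "(S-y)*(1 + d*x) \<le> 0" using Sy d x by (simp add: mult_nonpos_nonneg)
  moreover have "F*(d+g)*x \<ge> 0" "d*x^2 \<ge> 0" using F d g x by simp_all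
  moreover have "layer_den S F d g x y = (S-y)*(1 + d*x) - x - F*(d+g)*x - d*x^2"
    unfolding layer_den_def by (simp add: algebra_simps)
  ultimately show ?thesis using x by linarith
qed

text \<open>The key inequality: moving to a larger x and a larger feedback y decreases the
  denominator faster than proportionally, i.e. x / layer_den is strictly increasing.\<close>
lemma layer_den_cross:
  fixes S F d g xs xt ys yt :: real
  assumes d: "d > 0" and x: "0 < xs" "xs < xt" and y: "ys \<le> yt" and Sy: "yt < S"
  shows "xs * layer_den S F d g xt yt < xt * layer_den S F d g xs ys"
proof -
  have eq: "xt * layer_den S F d g xs ys - xs * layer_den S F d g xt yt
     = ((S-ys)*xt - (S-yt)*xs) + d*xs*xt*(yt-ys) + d*xs*xt*(xt-xs)"
    unfolding layer_den_def by (simp add: algebra_simps power2_eq_square)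
  have "(S-ys)*xt \<ge> (S-yt)*xt" using y x by (intro mult_right_mono) auto
  moreover have "(S-yt)*xt > (S-yt)*xs" using Sy x by simp
  moreover have "d*xs*xt*(yt-ys) \<ge> 0" "d*xs*xt*(xt-xs) > 0" using d x y by simp_all
  ultimately show ?thesis using eq by linarith
qed

lemma layer_den_stays_negative:
  fixes x y :: "real \<Rightarrow> real"
  assumes d: "d > 0" and F: "F \<ge> 0" and g: "g \<ge> 0"
    and xm: "strict_mono_on {0..<b} x" and x0: "x 0 = 0" and ym: "mono_on {0..<b} y"
    and u: "0 < u" "u < t" "t < b" and Du: "layer_den S F d g (x u) (y u) \<le> 0"
  shows "layer_den S F d g (x t) (y t) < 0"
proof -
  have xu: "0 < x u" using strict_mono_onD[OF xm, of 0 u] u x0 by simp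
  have xt: "x u < x t" using strict_mono_onD[OF xm, of u t] u by simp
  have yt: "y u \<le> y t" using ym u unfolding mono_on_def by auto
  show ?thesis
  proof (cases "y t < S")
    case True
    have "x u * layer_den S F d g (x t) (y t) < x t * layer_den S F d g (x u) (y u)"
      using layer_den_cross[OF d xu xt yt True] .
    also have "\<dots> \<le> 0" using Du xu xt by (simp add: mult_nonneg_nonpos)
    finally show ?thesis using xu by (simp add: mult_less_0_iff)
  next
    case False
    thus ?thesis using layer_den_exhausted[OF d F g] xu xt by simp
  qed
qed

lemma layer_den_first_zero:
  fixes x y :: "real \<Rightarrow> real"
  assumes d: "d > 0" and F: "F \<ge> 0" and g: "g \<ge> 0" and S: "S > 0"
    and xc: "continuous_on {0..<b} x" and xm: "strict_mono_on {0..<b} x" and x0: "x 0 = 0"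
    and yc: "continuous_on {0..<b} y" and ym: "mono_on {0..<b} y" and y0: "y 0 = 0"
    and s1: "0 < s1" "s1 < b" and Ds1: "layer_den S F d g (x s1) (y s1) \<le> 0"
  shows "\<exists>\<beta>. 0 < \<beta> \<and> \<beta> \<le> s1 \<and> layer_den S F d g (x \<beta>) (y \<beta>) = 0 \<and>
     (\<forall>s. 0 \<le> s \<and> s < b \<longrightarrow> (0 < layer_den S F d g (x s) (y s) \<longleftrightarrow> s < \<beta>))"
proof -
  define D where "D s = layer_den S F d g (x s) (y s)" for s
  have D0: "D 0 = S" unfolding D_def layer_den_def x0 y0 by simp
  have neg: "D t < 0" if "0 < u" "u < t" "t < b" "D u \<le> 0" for u t
    using layer_den_stays_negative[OF d F g xm x0 ym that(1-3)] that(4) unfolding D_def by simp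
  have "continuous_on {0..s1} D" unfolding D_def
    by (intro continuous_intros continuous_on_subset[OF xc] continuous_on_subset[OF yc]) (use s1 in auto)
  then obtain \<beta> where b0: "0 \<le> \<beta>" and b1: "\<beta> \<le> s1" and Db: "D \<beta> = 0"
    using IVT2'[of D s1 0 0] Ds1 D0 S s1 unfolding D_def by auto
  have bpos: "0 < \<beta>" using b0 Db D0 S by (cases "\<beta> = 0") auto
  have "0 < D s \<longleftrightarrow> s < \<beta>" if "0 \<le> s" "s < b" for s
  proof
    assume "0 < D s"
    show "s < \<beta>"
    proof (rule ccontr)
      assume "\<not> s < \<beta>"
      hence "\<beta> < s" using \<open>0 < D s\<close> Db by (cases "s = \<beta>") auto
      thus False using neg[OF bpos _ that(2)] Db \<open>0 < D s\<close> by auto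
    qed
  next
    assume "s < \<beta>"
    show "0 < D s"
    proof (rule ccontr)
      assume "\<not> 0 < D s"
      moreover have "0 < s" using that D0 S \<open>\<not> 0 < D s\<close> by (cases "s = 0") auto
      ultimately show False using neg[of s \<beta>] \<open>s < \<beta>\<close> b1 s1 Db by auto
    qed
  qed
  thus ?thesis using bpos b1 Db unfolding D_def by blast
qed

lemma layer_quotient:
  fixes x y :: "real \<Rightarrow> real"
  assumes d: "d > 0" and F: "F \<ge> 0" and g: "g \<ge> 0" and L: "L > 0"
    and xc: "continuous_on {0..<b} x" and xm: "strict_mono_on {0..<b} x" and x0: "x 0 = 0"
    and yc: "continuous_on {0..<b} y" and ym: "mono_on {0..<b} y"
    and bb: "0 < \<beta>" "\<beta> < b" and Dp: "\<And>s. 0 \<le> s \<Longrightarrow> s < \<beta> \<Longrightarrow> 0 < layer_den S F d g (x s) (y s)"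
    and Db: "layer_den S F d g (x \<beta>) (y \<beta>) = 0"
  defines "f \<equiv> \<lambda>s. L * x s / layer_den S F d g (x s) (y s)"
  shows "continuous_on {0..<\<beta>} f" "strict_mono_on {0..<\<beta>} f" "filterlim f at_top (at_left \<beta>)"
proof -
  define D where "D s = layer_den S F d g (x s) (y s)" for s
  have f: "f = (\<lambda>s. L * x s / D s)" unfolding f_def D_def ..
  have sub: "{0..<\<beta>} \<subseteq> {0..<b}" using bb by auto
  show "continuous_on {0..<\<beta>} f" unfolding f D_def
    by (intro continuous_intros continuous_on_subset[OF xc sub] continuous_on_subset[OF yc sub])
      (use Dp in force)
  have xpos: "0 < x s" if "0 < s" "s < b" for s
    using strict_mono_onD[OF xm, of 0 s] that x0 by simp
  show "strict_mono_on {0..<\<beta>} f"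
  proof (rule strict_mono_onI)
    fix r t assume r: "r \<in> {0..<\<beta>}" and t: "t \<in> {0..<\<beta>}" and rt: "r < t"
    have Dr: "0 < D r" and Dt: "0 < D t" using Dp r t unfolding D_def by auto
    have xt: "0 < x t" using xpos[of t] r t rt bb by auto
    have "x r / D r < x t / D t"
    proof (cases "r = 0")
      case True
      thus ?thesis using x0 xt Dt by simp
    next
      case False
      hence xr: "0 < x r" using xpos[of r] r bb by auto
      have xrt: "x r < x t" using strict_mono_onD[OF xm, of r t] r t rt bb by simp
      have yrt: "y r \<le> y t" using ym r t rt bb unfolding mono_on_def by auto
      have "y t < S" using layer_den_exhausted[OF d F g xt, of S "y t"] Dt unfolding D_def by force
      hence "x r * D t < x t * D r" unfolding D_def using layer_den_cross[OF d xr xrt yrt] by blast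
      thus ?thesis using Dr Dt by (simp add: divide_simps mult.commute)
    qed
    hence "L * (x r / D r) < L * (x t / D t)" using L by (rule mult_strict_left_mono)
    thus "f r < f t" unfolding f by (simp only: times_divide_eq_right)
  qed
  have bint: "\<beta> \<in> interior {0..<b}" using bb by simp
  have cx: "(x \<longlongrightarrow> x \<beta>) (at_left \<beta>)" and cy: "(y \<longlongrightarrow> y \<beta>) (at_left \<beta>)"
    using continuous_on_interior[OF xc bint] continuous_on_interior[OF yc bint]
    by (simp_all add: isCont_def filterlim_at_split)
  have "(D \<longlongrightarrow> layer_den S F d g (x \<beta>) (y \<beta>)) (at_left \<beta>)"
    unfolding D_def layer_den_def by (intro tendsto_intros cx cy)
  hence "(D \<longlongrightarrow> 0) (at_left \<beta>)" using Db by simp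
  moreover have "\<forall>\<^sub>F s in at_left \<beta>. 0 < D s"
    using eventually_at_left_real[OF bb(1)] by eventually_elim (use Dp in \<open>auto simp: D_def\<close>)
  ultimately have "filterlim (\<lambda>s. inverse (D s)) at_top (at_left \<beta>)"
    by (rule filterlim_inverse_at_top)
  moreover have "((\<lambda>s. L * x s) \<longlongrightarrow> L * x \<beta>) (at_left \<beta>)" by (intro tendsto_intros cx)
  moreover have "0 < L * x \<beta>" using L xpos[OF bb] by simp
  ultimately show "filterlim f at_top (at_left \<beta>)"
    unfolding f using filterlim_tendsto_pos_mult_at_top by (simp add: divide_inverse)
qed

lemma layer_den_large_total:
  fixes t F d g X Y :: real
  assumes "0 \<le> X" "d > 0" "F \<ge> 0" "g \<ge> 0" "t > Y + X + F*(d+g)*X + d*X^2"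
  shows "0 < layer_den t F d g X Y"
proof -
  have "0 \<le> X + F*(d+g)*X + d*X^2" using assms by simp
  hence "0 \<le> t - Y" using assms(5) by linarith
  hence "(t - Y) * (1 + d*X) \<ge> t - Y" using assms by (simp add: mult_le_cancel_left1)
  moreover have "layer_den t F d g X Y = (t - Y) * (1 + d*X) - X - F*(d+g)*X - d*X^2"
    unfolding layer_den_def by (simp add: algebra_simps)
  ultimately show ?thesis using assms by linarith
qed

section \<open>Layer parameters, alpha and the feedback term\<close>

lemma valid_params_pos:
  assumes "valid_params P n" "j \<in> {1..n}"
  shows "0 < delta P j" "0 < gamma P j" "0 < lam P j" "0 < Fb P j" "0 < Sb P j"
proof -
  have h: "0 < a0 P j" "0 < b0 P j" "0 < c0 P j" "0 < a1 P j" "0 < b1 P j" "0 < c1 P j"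
    "0 < Fb P j" "0 < Sb P j" using assms unfolding valid_params_def by auto
  show d: "0 < delta P j" unfolding delta_def using h by simp
  show g: "0 < gamma P j" unfolding gamma_def using d h by simp
  show "0 < lam P j" unfolding lam_def using g h by simp
  show "0 < Fb P j" "0 < Sb P j" using h by auto
qed

lemma dd_feedback: "dd P j x y = dd P j x 0 - y * (1 + delta P j * x)"
  unfolding dd_def by (simp add: algebra_simps)

lemma alpha_props:
  assumes "valid_params P n" "j \<in> {1..n}"
  shows "0 < alpha P j" "dd P j (alpha P j) 0 = 0"
    "\<And>x. 0 \<le> x \<Longrightarrow> 0 < dd P j x 0 \<longleftrightarrow> x < alpha P j"
proof -
  note p = valid_params_pos[OF assms]
  obtain a where a0: "a > 0"
    and fac: "\<And>x. Sb P j + (delta P j * Sb P j - 1 - Fb P j * (delta P j + gamma P j))*x - delta P j*x^2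
        = -(x-a)*(delta P j*x + Sb P j/a)"
    using concave_quadratic_root[OF p(5) p(1)] by blast
  have dd0: "dd P j x 0 = -(x-a)*(delta P j*x + Sb P j/a)" for x
    unfolding fac[symmetric] dd_def by (simp add: algebra_simps)
  have pos: "delta P j*x + Sb P j/a > 0" if "x \<ge> 0" for x
    using that p a0 by (simp add: add_nonneg_pos)
  have "alpha P j = a" unfolding alpha_def
  proof (rule the_equality)
    show "0 < a \<and> dd P j a 0 = 0" using a0 dd0[of a] by simp
  next
    fix x assume "0 < x \<and> dd P j x 0 = 0"
    thus "x = a" using dd0[of x] pos[of x] by simp
  qed
  thus "0 < alpha P j" "dd P j (alpha P j) 0 = 0" using a0 dd0[of a] by auto
  show "0 < dd P j x 0 \<longleftrightarrow> x < alpha P j" if "0 \<le> x" for x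
    using pos[OF that] \<open>alpha P j = a\<close> unfolding dd0 by (simp add: zero_less_mult_iff)
qed

lemma gY_nonneg:
  assumes "valid_params P n" "j \<in> {1..n}" "0 \<le> u"
  shows "0 \<le> gY P j u"
  using valid_params_pos[OF assms(1,2)] assms(3) unfolding gY_def by simp

lemma gY_mono:
  assumes "valid_params P n" "j \<in> {1..n}" "0 \<le> u" "u \<le> v"
  shows "gY P j u \<le> gY P j v"
proof -
  note p = valid_params_pos[OF assms(1,2)]
  have "u * (1 + delta P j * v) \<le> v * (1 + delta P j * u)"
    using assms(3,4) by (simp add: algebra_simps)
  hence "u / (1 + delta P j * u) \<le> v / (1 + delta P j * v)"
    using p assms(3,4) by (simp add: divide_simps add_pos_nonneg mult.commute)
  hence "(gamma P j * Fb P j) * (u / (1 + delta P j * u)) \<le> (gamma P j * Fb P j) * (v / (1 + delta P j * v))"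
    using p by (intro mult_left_mono) auto
  thus ?thesis unfolding gY_def by simp
qed

lemma gY_continuous_on:
  assumes "valid_params P n" "j \<in> {1..n}" "continuous_on A z" "\<And>s. s \<in> A \<Longrightarrow> 0 \<le> z s"
  shows "continuous_on A (\<lambda>s. gY P j (z s))"
proof -
  have "1 + delta P j * z s \<noteq> 0" if "s \<in> A" for s
    using valid_params_pos[OF assms(1,2)] assms(4)[OF that] by (smt (verit) mult_nonneg_nonneg)
  thus ?thesis unfolding gY_def by (intro continuous_intros assms(3)) auto
qed

section \<open>The recursion defining f_i\<close>

lemma fcas_last[simp]: "fcas P n n s = s"
  unfolding fcas_def by simp

lemma fYcas_last[simp]: "fYcas P n (Suc n) s = 0"
  unfolding fYcas_def by simp

lemma fYcas_gY: "j \<le> n \<Longrightarrow> fYcas P n j s = gY P j (fcas P n j s)"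
  unfolding fYcas_def by simp

lemma snd_cas: "j \<le> n \<Longrightarrow> snd (cas P n j s) = fYcas P n (n - j + 1) s"
proof (cases j)
  case (Suc k)
  assume "j \<le> n"
  hence "n - j + 1 = n - k" "n - k \<noteq> n + 1" "n - (n - k) = k" using Suc by auto
  thus ?thesis using Suc unfolding fYcas_def fcas_def by (simp add: Let_def)
qed simp

lemma fcas_step:
  assumes "i < n"
  shows "fcas P n i s = lam P (i+1) * Fb P (i+1) * fcas P n (i+1) s /
           dd P (i+1) (fcas P n (i+1) s) (fYcas P n (i+2) s)"
proof -
  define j where "j = n - (i+1)"
  have nj: "n - i = Suc j" "n - j = i + 1" "n - j + 1 = i + 2" using assms unfolding j_def by auto
  have "fcas P n i s = fst (cas P n (Suc j) s)" unfolding fcas_def nj(1) ..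
  also have "\<dots> = lam P (i+1) * Fb P (i+1) * fst (cas P n j s) /
                     dd P (i+1) (fst (cas P n j s)) (snd (cas P n j s))"
    by (simp add: Let_def nj(2))
  also have "snd (cas P n j s) = fYcas P n (i+2) s" using snd_cas[of j n P s] nj unfolding j_def by simp
  also have "fst (cas P n j s) = fcas P n (i+1) s" unfolding fcas_def j_def ..
  finally show ?thesis .
qed

lemma fcas_product:
  assumes "i \<le> n"
  shows "fcas P n i s = (\<Prod>j\<in>{i + 1..n}. lam P j * Fb P j) * s /
           (\<Prod>j\<in>{i + 1..n}. dd P j (fcas P n j s) (fYcas P n (j + 1) s))"
  using assms
proof (induction i rule: inc_induct)
  case (step m)
  define num where "num = (\<Prod>j\<in>{m + 2..n}. lam P j * Fb P j)"
  define den where "den = (\<Prod>j\<in>{m + 2..n}. dd P j (fcas P n j s) (fYcas P n (j + 1) s))"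
  have split: "{m+1..n} = insert (m+1) {m+2..n}" "m+1 \<notin> {m+2..n}" using step.hyps by auto
  have "fcas P n m s = lam P (m+1) * Fb P (m+1) * (num * s / den) /
           dd P (m+1) (fcas P n (m+1) s) (fYcas P n (m+2) s)"
    using fcas_step[of m n P s] step.hyps step.IH unfolding num_def den_def by (simp add: numeral_2_eq_2)
  also have "\<dots> = (lam P (m+1) * Fb P (m+1) * num) * s /
           (dd P (m+1) (fcas P n (m+1) s) (fYcas P n (m+2) s) * den)"
    by (simp add: mult_ac)
  finally show ?case unfolding split num_def den_def by (simp add: split numeral_2_eq_2 mult.assoc)
qed simp

lemma cas_indep:
  assumes r: "\<forall>j. a0 Q j = a0 P j \<and> b0 Q j = b0 P j \<and> c0 Q j = c0 P j \<and>
                a1 Q j = a1 P j \<and> b1 Q j = b1 P j \<and> c1 Q j = c1 P j"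
    and f: "\<forall>j\<in>{i + 1..n}. Fb Q j = Fb P j \<and> Sb Q j = Sb P j"
  shows "k \<le> n - i \<Longrightarrow> cas Q n k s = cas P n k s"
proof (induction k)
  case (Suc k)
  have m: "n - k \<in> {i+1..n}" using Suc.prems by auto
  have e: "lam Q (n-k) = lam P (n-k)" "delta Q (n-k) = delta P (n-k)" "gamma Q (n-k) = gamma P (n-k)"
    "Fb Q (n-k) = Fb P (n-k)" "Sb Q (n-k) = Sb P (n-k)"
    using r f m unfolding lam_def gamma_def delta_def by auto
  have "dd Q (n-k) = dd P (n-k)" "gY Q (n-k) = gY P (n-k)"
    unfolding dd_def[abs_def] gY_def[abs_def] e by simp_all
  thus ?case using Suc by (simp add: Let_def e)
qed simp

lemma fcas_indep:
  assumes "\<forall>j. a0 Q j = a0 P j \<and> b0 Q j = b0 P j \<and> c0 Q j = c0 P j \<and>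
                a1 Q j = a1 P j \<and> b1 Q j = b1 P j \<and> c1 Q j = c1 P j"
    and "\<forall>j\<in>{i + 1..n}. Fb Q j = Fb P j \<and> Sb Q j = Sb P j"
  shows "fcas Q n i = fcas P n i"
  unfolding fcas_def[abs_def] using cas_indep[OF assms] by simp

section \<open>Each f_i is a good branch on [0, beta_i)\<close>

definition branch_den :: "ptm_params \<Rightarrow> nat \<Rightarrow> nat \<Rightarrow> real \<Rightarrow> real" where
  "branch_den P n i s = dd P (i+1) (fcas P n (i+1) s) (fYcas P n (i+2) s)"

text \<open>The invariant of the downward induction over the layers: on [0,beta), f_i is continuous,
  strictly increasing from 0 and blows up at beta, where its denominator has its first zero
  (first within the domain [0,beta_{i+1}) of f_{i+1}, which contains beta).\<close>
definition good_branch :: "ptm_params \<Rightarrow> nat \<Rightarrow> nat \<Rightarrow> real \<Rightarrow> bool" where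
  "good_branch P n i \<beta> \<longleftrightarrow> 0 < \<beta> \<and> continuous_on {0..<\<beta>} (fcas P n i) \<and>
     strict_mono_on {0..<\<beta>} (fcas P n i) \<and> fcas P n i 0 = 0 \<and>
     filterlim (fcas P n i) at_top (at_left \<beta>) \<and> branch_den P n i \<beta> = 0 \<and>
     (i+1 < n \<longrightarrow> \<beta> < beta P n (i+1)) \<and>
     (\<forall>s. 0 \<le> s \<and> (i+1 < n \<longrightarrow> s < beta P n (i+1)) \<longrightarrow> (0 < branch_den P n i s \<longleftrightarrow> s < \<beta>))"

text \<open>A good branch determines beta_i: it is the blow-up point, hence the smallest positive singularity.\<close>
lemma good_branch_beta: "good_branch P n i \<beta> \<Longrightarrow> beta P n i = \<beta>"
  unfolding good_branch_def beta_def using blowup_singularity(3) by blast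

lemma good_branch_last:
  assumes v: "valid_params P n" and n1: "1 \<le> n"
  shows "good_branch P n (n-1) (alpha P n)"
proof -
  have nn: "n \<in> {1..n}" using n1 by simp
  note p = valid_params_pos[OF v nn] and a = alpha_props[OF v nn]
  define L where "L = lam P n * Fb P n"
  define D where "D x y = layer_den (Sb P n) (Fb P n) (delta P n) (gamma P n) x y" for x y
  have i1: "n - 1 + 1 = n" "n - 1 + 2 = Suc n" "n - 1 < n" using n1 by auto
  have f: "fcas P n (n-1) = (\<lambda>s. L * s / D s 0)"
  proof
    fix s show "fcas P n (n-1) s = L * s / D s 0"
      using fcas_step[OF i1(3), of P s] unfolding i1 L_def D_def dd_layer_den by simp
  qed
  have den: "branch_den P n (n-1) s = dd P n s 0" for s unfolding branch_den_def i1 by simp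
  have Dpos: "0 < D s 0" if "0 \<le> s" "s < alpha P n" for s
    using a(3)[OF that(1)] that unfolding D_def dd_layer_den by simp
  have Dzero: "D (alpha P n) 0 = 0" using a(2) unfolding D_def dd_layer_den by simp
  have mono: "strict_mono_on {0..<alpha P n + 1} (\<lambda>s::real. s)" "mono_on {0..<alpha P n + 1} (\<lambda>s::real. 0::real)"
    by (auto simp: strict_mono_on_def mono_on_def)
  have F0: "0 \<le> Fb P n" "0 \<le> gamma P n" and Lp: "0 < L" and ab: "alpha P n < alpha P n + 1"
    using p unfolding L_def by auto
  note q = layer_quotient[OF p(1) F0 Lp continuous_on_id mono(1) refl continuous_on_const mono(2) a(1) ab
      Dpos[unfolded D_def] Dzero[unfolded D_def], folded D_def f]
  show ?thesis unfolding good_branch_def den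
  proof (intro conjI)
    show "fcas P n (n - 1) 0 = 0" unfolding f by simp
  qed (use q a(1,2) a(3) i1 in auto)
qed

lemma feedback_regular:
  assumes v: "valid_params P n" and i: "i + 1 < n"
    and G1: "good_branch P n (i+1) (beta P n (i+1))"
    and G2: "i + 2 < n \<Longrightarrow> good_branch P n (i+2) (beta P n (i+2))"
  defines "b \<equiv> beta P n (i+1)" and "y \<equiv> fYcas P n (i+2)"
  shows "continuous_on {0..<b} y" "mono_on {0..<b} y" "y 0 = 0" "\<And>s. s \<in> {0..<b} \<Longrightarrow> 0 \<le> y s"
proof -
  define z where "z = fcas P n (i+2)"
  have j2: "i+2 \<in> {1..n}" using i by auto
  have b0: "0 < b" using G1 unfolding good_branch_def b_def by simp
  have z: "continuous_on {0..<b} z \<and> mono_on {0..<b} z \<and> z 0 = 0"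
  proof (cases "i + 2 = n")
    case True
    hence "z = (\<lambda>s. s)" unfolding z_def by auto
    thus ?thesis by (auto simp: mono_on_def intro: continuous_on_id)
  next
    case False
    hence lt: "i + 2 < n" using i by simp
    have sub: "{0..<b} \<subseteq> {0..<beta P n (i+2)}"
      using G1 lt unfolding good_branch_def b_def by (auto simp: numeral_2_eq_2)
    have "continuous_on {0..<beta P n (i+2)} z" "strict_mono_on {0..<beta P n (i+2)} z" "z 0 = 0"
      using G2[OF lt] unfolding good_branch_def z_def by auto
    thus ?thesis using continuous_on_subset[OF _ sub] mono_on_subset[OF strict_mono_on_imp_mono_on sub]
      by auto
  qed
  have znn: "0 \<le> z s" if "s \<in> {0..<b}" for s
    using z that b0 unfolding mono_on_def by (metis atLeastLessThan_iff order_refl)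
  have yz: "y = (\<lambda>s. gY P (i+2) (z s))" unfolding y_def z_def using j2 by (auto simp: fYcas_gY)
  show "continuous_on {0..<b} y" unfolding yz using gY_continuous_on[OF v j2] z znn by blast
  show "mono_on {0..<b} y" unfolding yz using z znn gY_mono[OF v j2] by (auto simp: mono_on_def)
  show "y 0 = 0" unfolding yz using z by (simp add: gY_def)
  show "0 \<le> y s" if "s \<in> {0..<b}" for s unfolding yz using gY_nonneg[OF v j2 znn[OF that]] .
qed

text \<open>Since f_{i+1}
  blows up at beta_{i+1}, it eventually exceeds alpha_{i+1}, where the denominator is <= 0;
  so the denominator has a first zero beta_i < beta_{i+1}.\<close>
lemma good_branch_step:
  assumes v: "valid_params P n" and i: "i + 1 < n"
    and G1: "good_branch P n (i+1) (beta P n (i+1))"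
    and G2: "i + 2 < n \<Longrightarrow> good_branch P n (i+2) (beta P n (i+2))"
  shows "good_branch P n i (beta P n i)"
proof -
  define b where "b = beta P n (i+1)"
  define x where "x = fcas P n (i+1)"
  define y where "y = fYcas P n (i+2)"
  define D where "D u w = layer_den (Sb P (i+1)) (Fb P (i+1)) (delta P (i+1)) (gamma P (i+1)) u w" for u w
  have j1: "i+1 \<in> {1..n}" using i by auto
  note p = valid_params_pos[OF v j1] and a = alpha_props[OF v j1]
  note y = feedback_regular[OF v i G1 G2, folded b_def y_def]
  have b0: "0 < b" and xc: "continuous_on {0..<b} x" and xm: "strict_mono_on {0..<b} x"
    and x0: "x 0 = 0" and xl: "filterlim x at_top (at_left b)"
    using G1 unfolding good_branch_def b_def x_def by auto
  have "\<forall>\<^sub>F s in at_left b. alpha P (i+1) < x s \<and> s \<in> {0<..<b}"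
    using xl[unfolded filterlim_at_top_dense] eventually_at_left_real[OF b0]
    by (auto intro: eventually_conj)
  then obtain s1 where s1: "alpha P (i+1) < x s1" "0 < s1" "s1 < b"
    using eventually_happens'[OF trivial_limit_at_left_real] by fastforce
  have "D (x s1) (y s1) = dd P (i+1) (x s1) 0 - y s1 * (1 + delta P (i+1) * x s1)"
    unfolding D_def dd_layer_den[symmetric] by (rule dd_feedback)
  also have "\<dots> \<le> dd P (i+1) (x s1) 0" using y(4)[of s1] s1 p a(1) by simp
  also have "\<dots> \<le> 0" using a(3)[of "x s1"] s1 a(1) by simp
  finally have Ds1: "D (x s1) (y s1) \<le> 0" .
  obtain \<beta> where bp: "0 < \<beta>" "\<beta> \<le> s1" and Db: "D (x \<beta>) (y \<beta>) = 0"
    and sign: "\<forall>s. 0 \<le> s \<and> s < b \<longrightarrow> (0 < D (x s) (y s) \<longleftrightarrow> s < \<beta>)"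
    using layer_den_first_zero[OF p(1) _ _ p(5) xc xm x0 y(1,2,3) s1(2,3) Ds1[unfolded D_def]] p
    unfolding D_def by auto
  have f: "fcas P n i = (\<lambda>s. lam P (i+1) * Fb P (i+1) * x s / D (x s) (y s))"
  proof
    fix s show "fcas P n i s = lam P (i+1) * Fb P (i+1) * x s / D (x s) (y s)"
      using fcas_step[of i n P s] i unfolding x_def y_def D_def dd_layer_den by simp
  qed
  have den: "branch_den P n i s = D (x s) (y s)" for s
    unfolding branch_den_def D_def x_def y_def dd_layer_den ..
  have F0: "0 \<le> Fb P (i+1)" "0 \<le> gamma P (i+1)" and Lp: "0 < lam P (i+1) * Fb P (i+1)"
    using p by auto
  have "\<beta> < b" using bp s1 by simp
  hence Dp: "0 < D (x s) (y s)" if "0 \<le> s" "s < \<beta>" for s using sign that by auto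
  note q = layer_quotient[OF p(1) F0 Lp xc xm x0 y(1,2) bp(1) \<open>\<beta> < b\<close>
      Dp[unfolded D_def] Db[unfolded D_def], folded D_def f]
  have "good_branch P n i \<beta>" unfolding good_branch_def den
  proof (intro conjI)
    show "fcas P n i 0 = 0" unfolding f x0 by simp
    show "i + 1 < n \<longrightarrow> \<beta> < beta P n (i + 1)" using \<open>\<beta> < b\<close> unfolding b_def by simp
    show "\<forall>s. 0 \<le> s \<and> (i + 1 < n \<longrightarrow> s < beta P n (i + 1)) \<longrightarrow> (0 < D (x s) (y s) \<longleftrightarrow> s < \<beta>)"
      using sign i unfolding b_def by blast
  qed (use q bp(1) Db in \<open>auto simp: f\<close>)
  thus ?thesis using good_branch_beta by metis
qed

lemma good_branch_all:
  assumes v: "valid_params P n" and i: "i < n"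
  shows "good_branch P n i (beta P n i)"
proof -
  have "good_branch P n m (beta P n m) \<and> (m + 1 < n \<longrightarrow> good_branch P n (m+1) (beta P n (m+1)))"
    if "m \<le> n - 1" for m
    using that
  proof (induction m rule: inc_induct)
    case base
    have "good_branch P n (n-1) (alpha P n)" using good_branch_last[OF v] i by simp
    moreover have "beta P n (n-1) = alpha P n" using good_branch_beta[OF calculation] .
    ultimately show ?case using i by simp
  next
    case (step m)
    thus ?case using good_branch_step[OF v, of m] by (simp add: numeral_2_eq_2)
  qed
  thus ?thesis using i by simp
qed

lemma beta_last:
  assumes "valid_params P n" "1 \<le> n"
  shows "beta P n (n-1) = alpha P n"
  using good_branch_beta[OF good_branch_last[OF assms]] .

section \<open>Steady states lie on the cascade\<close>

text \<open>S_i^1 with the convention S_0^1 = E: the kinase acting on layer i+1.\<close>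
definition kinase :: "real \<Rightarrow> (nat \<Rightarrow> real) \<Rightarrow> nat \<Rightarrow> real" where
  "kinase E S1 i = (if i = 0 then E else S1 i)"

text \<open>Y_i^0 with the convention Y_{n+1}^0 = 0: the complex that layer i-1 forms with layer i.\<close>
definition load :: "nat \<Rightarrow> (nat \<Rightarrow> real) \<Rightarrow> nat \<Rightarrow> real" where
  "load n Y0 i = (if i = n + 1 then 0 else Y0 i)"

lemma bmss_layer_equations:
  assumes "bmss P n Eb E S0 S1 Fc Y0 Y1" "k \<in> {1..n}"
  shows "Y0 k = gamma P k * Fc k * S1 k" "Y1 k = delta P k * Fc k * S1 k"
    "lam P k * Fc k * S1 k = S0 k * kinase E S1 (k - 1)" "Fb P k = Fc k + Y1 k"
    "Sb P k = S0 k + S1 k + Y0 k + Y1 k + load n Y0 (k + 1)"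
    "0 \<le> S0 k" "0 \<le> S1 k" "0 \<le> Fc k" "0 \<le> Y0 k" "0 \<le> Y1 k"
  using assms unfolding bmss_def kinase_def load_def Let_def by auto

lemma bmss_enzyme:
  assumes "bmss P n Eb E S0 S1 Fc Y0 Y1"
  shows "Eb = E + Y0 1" "0 \<le> E"
  using assms unfolding bmss_def Let_def by auto

lemma bmss_phosphatase:
  assumes v: "valid_params P n" and B: "bmss P n Eb E S0 S1 Fc Y0 Y1" and k: "k \<in> {1..n}"
  shows "Fc k * (1 + delta P k * S1 k) = Fb P k" "0 < Fc k"
proof -
  note e = bmss_layer_equations[OF B k]
  show "Fc k * (1 + delta P k * S1 k) = Fb P k" using e(2,4) by (simp add: algebra_simps)
  thus "0 < Fc k" using valid_params_pos[OF v k] e(7,8)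
    by (smt (verit) mult_nonpos_nonneg mult_nonneg_nonneg)
qed

lemma bmss_zero_propagates:
  assumes v: "valid_params P n" and B: "bmss P n Eb E S0 S1 Fc Y0 Y1"
    and k: "k \<in> {1..n}" and z: "S1 k = 0"
  shows "kinase E S1 (k - 1) = 0"
proof -
  note e = bmss_layer_equations[OF B k]
  have "S0 k \<noteq> 0"
  proof
    assume S00: "S0 k = 0"
    hence "0 < load n Y0 (k+1)" using e(1,2,5) z valid_params_pos[OF v k] by simp
    hence kn: "k < n" and Y: "Y0 (k+1) > 0" unfolding load_def using k by (auto split: if_splits)
    have k1: "k+1 \<in> {1..n}" using kn by simp
    note e1 = bmss_layer_equations[OF B k1]
    have "S1 (k+1) \<noteq> 0" using Y e1(1) by auto
    moreover have "kinase E S1 k = 0" using z k unfolding kinase_def by simp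
    ultimately show False
      using e1(3) valid_params_pos[OF v k1] bmss_phosphatase(2)[OF v B k1] by simp
  qed
  thus ?thesis using e(3) z by simp
qed

lemma bmss_kinase_pos:
  assumes v: "valid_params P n" and n1: "1 \<le> n" and Eb: "0 < Eb"
    and B: "bmss P n Eb E S0 S1 Fc Y0 Y1" and k: "k \<le> n"
  shows "0 < kinase E S1 k"
  using k
proof (induction k)
  case 0
  have one: "1 \<in> {1..n}" using n1 by simp
  note e = bmss_layer_equations[OF B one] and E = bmss_enzyme[OF B]
  have "E \<noteq> 0"
  proof
    assume "E = 0"
    hence "S1 1 = 0" using e(3) valid_params_pos[OF v one] bmss_phosphatase(2)[OF v B one]
      by (simp add: kinase_def)
    thus False using e(1) E Eb \<open>E = 0\<close> by simp
  qed
  thus ?case using E(2) by (simp add: kinase_def)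
next
  case (Suc k)
  have k: "Suc k \<in> {1..n}" using Suc.prems by simp
  have "S1 (Suc k) \<noteq> 0" using bmss_zero_propagates[OF v B k] Suc by auto
  thus ?case using bmss_layer_equations(7)[OF B k] by (simp add: kinase_def less_le)
qed

text \<open>Eliminating S_k^0, F_k and Y_k^1 from the equations of layer k: the kinase of layer k
  satisfies d_k(S_k^1, Y_{k+1}^0) * S_{k-1}^1 = lambda_k F_k S_k^1 with a positive denominator,
  and Y_k^0 = g^Y_k(S_k^1).\<close>
lemma bmss_layer:
  assumes v: "valid_params P n" and n1: "1 \<le> n" and Eb: "0 < Eb"
    and B: "bmss P n Eb E S0 S1 Fc Y0 Y1" and k: "k \<in> {1..n}"
  shows "0 < dd P k (S1 k) (load n Y0 (k+1))"
    "dd P k (S1 k) (load n Y0 (k+1)) * kinase E S1 (k-1) = lam P k * Fb P k * S1 k"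
    "Y0 k = gY P k (S1 k)"
proof -
  note e = bmss_layer_equations[OF B k] and p = valid_params_pos[OF v k]
  note Fc = bmss_phosphatase[OF v B k]
  have S1: "0 < S1 k" using bmss_kinase_pos[OF v n1 Eb B, of k] k by (simp add: kinase_def)
  have Sk: "0 < kinase E S1 (k-1)" using k by (intro bmss_kinase_pos[OF v n1 Eb B]) auto
  have w: "0 < 1 + delta P k * S1 k" using p S1 by (simp add: add_pos_pos)
  have den: "dd P k (S1 k) (load n Y0 (k+1)) = S0 k * (1 + delta P k * S1 k)"
    using e(1,2,5) Fc(1)[symmetric] unfolding dd_def by (simp add: algebra_simps power2_eq_square)
  have "0 < lam P k * Fc k * S1 k" using p Fc(2) S1 by simp
  hence "0 < S0 k * kinase E S1 (k-1)" using e(3) by simp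
  hence "0 < S0 k" using Sk by (simp add: zero_less_mult_iff)
  thus "0 < dd P k (S1 k) (load n Y0 (k+1))" using den w by simp
  have "dd P k (S1 k) (load n Y0 (k+1)) * kinase E S1 (k-1) = (1 + delta P k * S1 k) * (lam P k * Fc k * S1 k)"
    unfolding den e(3) by simp
  also have "\<dots> = lam P k * (Fc k * (1 + delta P k * S1 k)) * S1 k" by simp
  also have "\<dots> = lam P k * Fb P k * S1 k" unfolding Fc(1) ..
  finally show "dd P k (S1 k) (load n Y0 (k+1)) * kinase E S1 (k-1) = lam P k * Fb P k * S1 k" .
  show "Y0 k = gY P k (S1 k)" unfolding e(1) gY_def using w Fc(1)[symmetric] by (simp add: field_simps)
qed

lemma bmss_cascade:
  assumes v: "valid_params P n" and n1: "1 \<le> n" and Eb: "0 < Eb"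
    and B: "bmss P n Eb E S0 S1 Fc Y0 Y1" and k: "k \<le> n"
  shows "kinase E S1 k = fcas P n k (S1 n) \<and> load n Y0 (k+1) = fYcas P n (k+1) (S1 n)"
  using k
proof (induction k rule: inc_induct)
  case base
  show ?case using n1 by (simp add: kinase_def load_def)
next
  case (step m)
  have k: "m+1 \<in> {1..n}" using step.hyps by simp
  note l = bmss_layer[OF v n1 Eb B k]
  have S1: "S1 (m+1) = fcas P n (m+1) (S1 n)" using step.IH by (simp add: kinase_def)
  have "kinase E S1 m = lam P (m+1) * Fb P (m+1) * S1 (m+1) / dd P (m+1) (S1 (m+1)) (load n Y0 (m+2))"
    using l(1,2) by (simp add: field_simps numeral_2_eq_2)
  also have "\<dots> = fcas P n m (S1 n)"
    using fcas_step[of m n P "S1 n"] step S1 by (simp add: numeral_2_eq_2)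
  finally show ?case
    using l(3) S1 step.hyps by (simp add: load_def fYcas_gY)
qed

lemma bmss_den_pos:
  assumes v: "valid_params P n" and n1: "1 \<le> n" and Eb: "0 < Eb"
    and B: "bmss P n Eb E S0 S1 Fc Y0 Y1" and k: "k \<in> {1..n}"
  shows "0 < dd P k (fcas P n k (S1 n)) (fYcas P n (k+1) (S1 n))"
proof -
  have "kinase E S1 k = S1 k" using k by (simp add: kinase_def)
  with bmss_cascade[OF v n1 Eb B, of k] k
  have "fcas P n k (S1 n) = S1 k" "fYcas P n (k+1) (S1 n) = load n Y0 (k+1)" by auto
  thus ?thesis using bmss_layer(1)[OF v n1 Eb B k] by (simp only:)
qed

lemma bmss_below_alpha:
  assumes v: "valid_params P n" and n1: "1 \<le> n" and Eb: "0 < Eb"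
    and B: "bmss P n Eb E S0 S1 Fc Y0 Y1" and k: "k \<in> {1..n}"
  shows "S1 k < alpha P k"
proof -
  have S1: "0 < S1 k" using bmss_kinase_pos[OF v n1 Eb B, of k] k by (simp add: kinase_def)
  have "0 \<le> load n Y0 (k+1)"
    using bmss_layer_equations(9)[OF B, of "k+1"] k unfolding load_def by auto
  hence "dd P k (S1 k) (load n Y0 (k+1)) \<le> dd P k (S1 k) 0"
    using dd_feedback[of P k "S1 k" "load n Y0 (k+1)"] valid_params_pos[OF v k] S1 by simp
  hence "0 < dd P k (S1 k) 0" using bmss_layer(1)[OF v n1 Eb B k] by simp
  thus ?thesis using alpha_props(3)[OF v k] S1 by simp
qed

text \<open>S_n^1 lies in the domain of every f_i: the denominators being positive, it lies below each
  first zero beta_i (downward induction, using the sign characterisation of good branches).\<close>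
lemma bmss_below_beta:
  assumes v: "valid_params P n" and n1: "1 \<le> n" and Eb: "0 < Eb"
    and B: "bmss P n Eb E S0 S1 Fc Y0 Y1" and i: "i < n"
  shows "S1 n < beta P n i"
proof -
  have S1: "0 \<le> S1 n" using bmss_layer_equations(7)[OF B] n1 by simp
  have "S1 n < beta P n k" if "k \<le> n - 1" for k
    using that
  proof (induction k rule: inc_induct)
    case base
    have "0 < branch_den P n (n-1) (S1 n)"
      using bmss_den_pos[OF v n1 Eb B, of n] n1 by (simp add: branch_den_def numeral_2_eq_2)
    thus ?case using good_branch_all[OF v, of "n-1"] S1 n1 unfolding good_branch_def by simp
  next
    case (step m)
    have "0 < branch_den P n m (S1 n)"
      using bmss_den_pos[OF v n1 Eb B, of "m+1"] step.hyps by (simp add: branch_den_def numeral_2_eq_2)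
    thus ?case using good_branch_all[OF v, of m] S1 step unfolding good_branch_def by simp
  qed
  thus ?thesis using i by simp
qed

section \<open>Dependence of beta_i on the total amount of layer i+1\<close>

abbreviation update_total :: "ptm_params \<Rightarrow> nat \<Rightarrow> real \<Rightarrow> ptm_params" where
  "update_total P j t \<equiv> P\<lparr>Sb := (Sb P)(j := t)\<rparr>"

lemma valid_params_update_total:
  "valid_params P n \<Longrightarrow> 0 < t \<Longrightarrow> valid_params (update_total P j t) n"
  unfolding valid_params_def by auto

lemma update_total_layer:
  fixes P :: ptm_params and i n :: nat and t s :: real
  defines "Q \<equiv> update_total P (i+1) t"
  shows "fcas Q n (i+1) = fcas P n (i+1)" "beta Q n (i+1) = beta P n (i+1)"
    "branch_den Q n i s = layer_den t (Fb P (i+1)) (delta P (i+1)) (gamma P (i+1))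
       (fcas P n (i+1) s) (fYcas P n (i+2) s)"
proof -
  have rates: "\<forall>j. a0 Q j = a0 P j \<and> b0 Q j = b0 P j \<and> c0 Q j = c0 P j \<and>
                a1 Q j = a1 P j \<and> b1 Q j = b1 P j \<and> c1 Q j = c1 P j"
    unfolding Q_def by simp
  show f1: "fcas Q n (i+1) = fcas P n (i+1)" by (rule fcas_indep[OF rates]) (auto simp: Q_def)
  thus "beta Q n (i+1) = beta P n (i+1)" unfolding beta_def by simp
  have "fcas Q n (i+2) = fcas P n (i+2)" by (rule fcas_indep[OF rates]) (auto simp: Q_def)
  moreover have "gY Q (i+2) = gY P (i+2)" unfolding gY_def[abs_def] gamma_def delta_def Q_def by simp
  ultimately have "fYcas Q n (i+2) = fYcas P n (i+2)" unfolding fYcas_def[abs_def] by (simp only:)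
  moreover have "delta Q (i+1) = delta P (i+1)" "gamma Q (i+1) = gamma P (i+1)"
    "Fb Q (i+1) = Fb P (i+1)" "Sb Q (i+1) = t"
    unfolding Q_def delta_def gamma_def by auto
  ultimately show "branch_den Q n i s = layer_den t (Fb P (i+1)) (delta P (i+1)) (gamma P (i+1))
       (fcas P n (i+1) s) (fYcas P n (i+2) s)"
    unfolding branch_den_def dd_layer_den f1 by simp
qed

text \<open>Part (d) for i < n-1: beta_i stays below beta_{i+1}, and any point a < beta_{i+1} is
  eventually below beta_i because the denominator at a becomes positive for a large total.\<close>
lemma beta_limit_inner:
  assumes v: "valid_params P n" and i: "i + 1 < n"
  shows "((\<lambda>t. beta (update_total P (i+1) t) n i) \<longlongrightarrow> beta P n (i + 1)) at_top"
proof (rule order_tendstoI)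
  define b where "b = beta P n (i+1)"
  have G: "good_branch (update_total P (i+1) t) n i (beta (update_total P (i+1) t) n i)" if "0 < t" for t
    using good_branch_all[OF valid_params_update_total[OF v that]] i by simp
  note u = update_total_layer[of P i _ n]
  fix a
  show "a > beta P n (i+1) \<Longrightarrow> \<forall>\<^sub>F t in at_top. beta (update_total P (i+1) t) n i < a"
    using eventually_gt_at_top[of "0::real"] by eventually_elim (use G i u in \<open>force simp: good_branch_def\<close>)
  assume a: "a < beta P n (i+1)"
  have Gb: "good_branch P n (i+1) b" using good_branch_all[OF v, of "i+1"] i unfolding b_def by simp
  show "\<forall>\<^sub>F t in at_top. a < beta (update_total P (i+1) t) n i"
  proof (cases "a < 0")
    case True
    show ?thesis using eventually_gt_at_top[of "0::real"]
      by eventually_elim (use G True in \<open>force simp: good_branch_def\<close>)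
  next
    case False
    define X where "X = fcas P n (i+1) a"
    define Y where "Y = fYcas P n (i+2) a"
    have X0: "0 \<le> X" using Gb False a strict_mono_onD[of "{0..<b}" "fcas P n (i+1)" 0 a]
      unfolding X_def good_branch_def b_def by (cases "a = 0") auto
    have j1: "i+1 \<in> {1..n}" using i by simp
    note p = valid_params_pos[OF v j1]
    show ?thesis
      using eventually_gt_at_top[of "max 0 (Y + X + Fb P (i+1)*(delta P (i+1)+gamma P (i+1))*X + delta P (i+1)*X^2)"]
    proof eventually_elim
      case (elim t)
      hence "0 < branch_den (update_total P (i+1) t) n i a"
        unfolding u(3) X_def[symmetric] Y_def[symmetric] using layer_den_large_total[OF X0 p(1)] p by simp
      thus ?case using G[of t] elim False a i u(2) unfolding good_branch_def by auto
    qed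
  qed
qed

lemma beta_limit_last:
  assumes v: "valid_params P n" and n1: "1 \<le> n"
  shows "filterlim (\<lambda>t. beta (update_total P n t) n (n-1)) at_top at_top"
  unfolding filterlim_at_top_dense
proof
  fix Z :: real
  have nn: "n \<in> {1..n}" using n1 by simp
  note p = valid_params_pos[OF v nn]
  show "\<forall>\<^sub>F t in at_top. Z < beta (update_total P n t) n (n-1)"
    using eventually_gt_at_top[of "max 0 (Z + Fb P n*(delta P n+gamma P n)*Z + delta P n*Z^2)"]
  proof eventually_elim
    case (elim t)
    hence vt: "valid_params (update_total P n t) n" using valid_params_update_total[OF v] by simp
    note a = alpha_props[OF vt nn] and b = beta_last[OF vt n1]
    have same: "delta (update_total P n t) n = delta P n" "gamma (update_total P n t) n = gamma P n"
      "Fb (update_total P n t) n = Fb P n" "Sb (update_total P n t) n = t"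
      unfolding delta_def gamma_def by auto
    show ?case
    proof (cases "Z < 0")
      case True thus ?thesis using a(1) b by simp
    next
      case False
      hence "0 < dd (update_total P n t) n Z 0" unfolding dd_layer_den same
        using layer_den_large_total[of Z "delta P n" "Fb P n" "gamma P n" 0 t] p elim by simp
      thus ?thesis using a(3) b False by simp
    qed
  qed
qed

theorem mainTheorem6:
  fixes P :: ptm_params and n :: nat and Eb :: real
  assumes n1: "1 \<le> n"
    and pos: "valid_params P n"
    and Ebpos: "0 < Eb"
  shows
   "(\<forall>i<n.
      \<comment> \<open>(a)\<close>
      0 < beta P n i \<and>
      continuous_on {0..<beta P n i} (fcas P n i) \<and>
      strict_mono_on {0..<beta P n i} (fcas P n i) \<and>
      fcas P n i 0 = 0 \<and>
      fcas P n i ` {0..<beta P n i} = {0..} \<and>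
      singular (fcas P n i) (beta P n i) \<and>
      (\<forall>s. 0 < s \<and> s < beta P n i \<longrightarrow> \<not> singular (fcas P n i) s) \<and>
      dd P (i + 1) (fcas P n (i + 1) (beta P n i)) (fYcas P n (i + 2) (beta P n i)) = 0 \<and>
      \<comment> \<open>(b)\<close>
      (\<forall>E S0 S1 Fc Y0 Y1. bmss P n Eb E S0 S1 Fc Y0 Y1 \<longrightarrow>
          0 \<le> S1 n \<and> S1 n < beta P n i \<and>
          (if i = 0 then E else S1 i) = fcas P n i (S1 n)) \<and>
      (\<forall>Q. (\<forall>j. a0 Q j = a0 P j \<and> b0 Q j = b0 P j \<and> c0 Q j = c0 P j \<and>
                a1 Q j = a1 P j \<and> b1 Q j = b1 P j \<and> c1 Q j = c1 P j) \<and>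
           (\<forall>j\<in>{i + 1..n}. Fb Q j = Fb P j \<and> Sb Q j = Sb P j) \<longrightarrow>
           fcas Q n i = fcas P n i) \<and>
      (\<forall>s. fcas P n i s =
           (\<Prod>j\<in>{i + 1..n}. lam P j * Fb P j) * s /
           (\<Prod>j\<in>{i + 1..n}. dd P j (fcas P n j s) (fYcas P n (j + 1) s))) \<and>
      \<comment> \<open>(c)\<close>
      (i = n - 1 \<longrightarrow> beta P n i = alpha P n) \<and>
      (i < n - 1 \<longrightarrow> beta P n i < beta P n (i + 1)) \<and>
      \<comment> \<open>(d)\<close>
      (i < n - 1 \<longrightarrow>
         ((\<lambda>t. beta (P\<lparr>Sb := (Sb P)(i + 1 := t)\<rparr>) n i) \<longlongrightarrow> beta P n (i + 1)) at_top) \<and>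
      (i = n - 1 \<longrightarrow>
         filterlim (\<lambda>t. beta (P\<lparr>Sb := (Sb P)(i + 1 := t)\<rparr>) n i) at_top at_top))
    \<and>
    \<comment> \<open>(e)\<close>
    (\<forall>E S0 S1 Fc Y0 Y1. bmss P n Eb E S0 S1 Fc Y0 Y1 \<longrightarrow>
        (\<forall>j\<in>{1..n}. S1 j < alpha P j))"
proof -
  have branch: "0 < beta P n i" "continuous_on {0..<beta P n i} (fcas P n i)"
    "strict_mono_on {0..<beta P n i} (fcas P n i)" "fcas P n i 0 = 0"
    "filterlim (fcas P n i) at_top (at_left (beta P n i))"
    "dd P (i + 1) (fcas P n (i + 1) (beta P n i)) (fYcas P n (i + 2) (beta P n i)) = 0"
    "i < n - 1 \<Longrightarrow> beta P n i < beta P n (i + 1)" if "i < n" for i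
    using good_branch_all[OF pos that] unfolding good_branch_def branch_den_def by auto
  have blowup: "fcas P n i ` {0..<beta P n i} = {0..}" "singular (fcas P n i) (beta P n i)"
    "\<And>s. 0 < s \<Longrightarrow> s < beta P n i \<Longrightarrow> \<not> singular (fcas P n i) s" if "i < n" for i
    using blowup_onto[OF branch(1-5)[OF that]] blowup_singularity[OF branch(1,2,5)[OF that]] by blast+
  have steady: "0 \<le> S1 n" "S1 n < beta P n i" "(if i = 0 then E else S1 i) = fcas P n i (S1 n)"
    if "i < n" "bmss P n Eb E S0 S1 Fc Y0 Y1" for i E S0 S1 Fc Y0 Y1
    using bmss_kinase_pos[OF pos n1 Ebpos that(2), of n] bmss_below_beta[OF pos n1 Ebpos that(2,1)]
      bmss_cascade[OF pos n1 Ebpos that(2), of i] that(1) n1 by (simp_all add: kinase_def)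
  have product: "i < n \<Longrightarrow> fcas P n i s = (\<Prod>j\<in>{i + 1..n}. lam P j * Fb P j) * s /
           (\<Prod>j\<in>{i + 1..n}. dd P j (fcas P n j s) (fYcas P n (j + 1) s))" for i s
    by (rule fcas_product) simp
  have limits: "i < n - 1 \<Longrightarrow> ((\<lambda>t. beta (update_total P (i+1) t) n i) \<longlongrightarrow> beta P n (i + 1)) at_top"
    "i = n - 1 \<Longrightarrow> filterlim (\<lambda>t. beta (update_total P (i+1) t) n i) at_top at_top" for i
    using beta_limit_inner[OF pos] beta_limit_last[OF pos n1] n1 by auto
  have last: "i = n - 1 \<Longrightarrow> beta P n i = alpha P n" for i using beta_last[OF pos n1] by simp
  show ?thesis
    by (intro conjI allI impI ballI; (elim conjE)?;
        rule branch blowup steady product last limits fcas_indep bmss_below_alpha[OF pos n1 Ebpos];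
        assumption)
qed

end
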